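(* Let $N\ge2$, $\sigma\in S_N$, and write $\sigma=T_{a_n}\cdots T_{a_1}$ as a product of simple transpositions. Let $\mathbf{A}_\sigma=\mathbf{T}_{a_n}\cdots\mathbf{T}_{a_1}$ be the associated $2^N\times 2^N$ matrix. Then for each $k=0,1,\dots,N$, \[ [\mathbf{A}_\sigma]_{h_k,h_k}=\operatorname{sgn}(\sigma)\prod_{j=1}^{k}\Big(\frac{1-\xi_j}{1-\xi_{\sigma(j)}}\Big)^{j-1}\prod_{j=k+1}^{N}\Big(\frac{1-\xi_j}{1-\xi_{\sigma(j)}}\Big)^{j-2}. \]
   Context: $\xi_1,\dots,\xi_N$ are complex variables different from $1$. For $l=1,\dots,N-1$, $T_l$ acts on $\sigma\in S_N$ (viewed as the word $(\sigma(1)\cdots\sigma(N))$) by $(T_l\sigma)(l)=\sigma(l+1)$, $(T_l\sigma)(l+1)=\sigma(l)$, $(T_l\sigma)(j)=\sigma(j)$ otherwise. $\mathbf{S}_{\beta\alpha}$ is the $4\times4$ matrix with rows $\big(-\tfrac{1-\xi_\beta}{1-\xi_\alpha},0,0,0\big)$, $\big(0,-\tfrac{1-\xi_\beta}{1-\xi_\alpha},\tfrac{\xi_\beta-\xi_\alpha}{1-\xi_\alpha},0\big)$, $(0,0,-1,0)$, $\big(0,0,0,-\tfrac{1-\xi_\beta}{1-\xi_\alpha}\big)$, and $\mathbf{T}_l(\alpha,\beta)=\mathbf{I}_2^{\otimes(l-1)}\otimes\mathbf{S}_{\beta\alpha}\otimes\mathbf{I}_2^{\otimes(N-l-1)}$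 (Kronecker products). In the product $\mathbf{A}_\sigma=\mathbf{T}_{a_n}\cdots\mathbf{T}_{a_1}$, the factor $\mathbf{T}_{a_i}$ means $\mathbf{T}_{a_i}(\alpha,\beta)$ where, with $\sigma_{i-1}=T_{a_{i-1}}\cdots T_{a_1}$ ($\sigma_0$ the identity), $\alpha=\sigma_{i-1}(a_i)$ and $\beta=\sigma_{i-1}(a_i+1)$ (i.e., $T_{a_i}$ turns the word $(\cdots\alpha\beta\cdots)$ into $(\cdots\beta\alpha\cdots)$). (The matrix $\mathbf{A}_\sigma$ is independent of the chosen decomposition.) $h_k=2^{N-1}+\dots+2^{N-k}+1$ for $1\le k\le N$, $h_0=1$. *)

theory Defs
  imports Complex_Main "HOL-Combinatorics.Permutations"
begin

text \<open>Square matrices are represented as functions nat => nat => complex with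
0-based indices; the dimension is carried explicitly where needed.\<close>

type_synonym cmat = "nat \<Rightarrow> nat \<Rightarrow> complex"

definition mmult :: "nat \<Rightarrow> cmat \<Rightarrow> cmat \<Rightarrow> cmat" where
  "mmult d A B = (\<lambda>i j. \<Sum>l<d. A i l * B l j)"

definition idm :: cmat where
  "idm = (\<lambda>i j. if i = j then 1 else 0)"

definition kron :: "nat \<Rightarrow> cmat \<Rightarrow> cmat \<Rightarrow> cmat" where
  "kron d A B = (\<lambda>i j. A (i div d) (j div d) * B (i mod d) (j mod d))"

definition I2 :: cmat where
  "I2 = (\<lambda>i j. if i = j \<and> i < 2 then 1 else 0)"

fun kpow :: "nat \<Rightarrow> cmat" where
  "kpow 0 = (\<lambda>i j. if i = 0 \<and> j = 0 then 1 else 0)"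
| "kpow (Suc m) = kron 2 (kpow m) I2"

definition Smat :: "complex \<Rightarrow> complex \<Rightarrow> cmat" where
  "Smat xb xa = (\<lambda>i j.
     if i = 0 \<and> j = 0 then - (1 - xb) / (1 - xa)
     else if i = 1 \<and> j = 1 then - (1 - xb) / (1 - xa)
     else if i = 1 \<and> j = 2 then (xb - xa) / (1 - xa)
     else if i = 2 \<and> j = 2 then -1
     else if i = 3 \<and> j = 3 then - (1 - xb) / (1 - xa)
     else 0)"

definition Tmat :: "nat \<Rightarrow> (nat \<Rightarrow> complex) \<Rightarrow> nat \<Rightarrow> nat \<Rightarrow> nat \<Rightarrow> cmat" where
  "Tmat N \<xi> l \<alpha> \<beta> =
     kron (2 ^ (N - l - 1)) (kron 4 (kpow (l - 1)) (Smat (\<xi> \<beta>) (\<xi> \<alpha>))) (kpow (N - l - 1))"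

definition swapw :: "nat \<Rightarrow> (nat \<Rightarrow> nat) \<Rightarrow> (nat \<Rightarrow> nat)" where
  "swapw l w = (\<lambda>j. if j = l then w (l + 1) else if j = l + 1 then w l else w j)"

fun wordof :: "(nat \<Rightarrow> nat) \<Rightarrow> nat list \<Rightarrow> (nat \<Rightarrow> nat)" where
  "wordof w [] = w"
| "wordof w (a # as) = wordof (swapw a w) as"

text \<open>The product T_{a_n} ... T_{a_1} with the factors labelled along the way,
starting from the current word w.\<close>
fun Aw :: "nat \<Rightarrow> (nat \<Rightarrow> complex) \<Rightarrow> (nat \<Rightarrow> nat) \<Rightarrow> nat list \<Rightarrow> cmat" where
  "Aw N \<xi> w [] = idm"
| "Aw N \<xi> w (a # as) = mmult (2 ^ N) (Aw N \<xi> (swapw a w) as) (Tmat N \<xi> a (w a) (w (a + 1)))"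

definition Amat :: "nat \<Rightarrow> (nat \<Rightarrow> complex) \<Rightarrow> nat list \<Rightarrow> cmat" where
  "Amat N \<xi> as = Aw N \<xi> id as"

text \<open>h_k = 2^{N-1} + ... + 2^{N-k} + 1 (a 1-based index), h_0 = 1.\<close>
definition hidx :: "nat \<Rightarrow> nat \<Rightarrow> nat" where
  "hidx N k = (\<Sum>i=1..k. 2 ^ (N - i)) + 1"

end

theory Submission
  imports Defs
begin

text \<open>All factors T_l(\<alpha>,\<beta>) are upper triangular, so a diagonal entry of A_\<sigma> is the
product of the corresponding diagonal entries of the factors. In binary, the 0-based index
h_k - 1 is k ones followed by N - k zeros, so T_l picks the diagonal entry of S at the base-4
digit formed by bits l and l + 1: -(1 - \<xi>_\<beta>)/(1 - \<xi>_\<alpha>) for l \<noteq> k and -1 for l = k.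
With e(j) = j - 1 for j \<le> k and e(j) = j - 2 for j > k, this is minus the ratio of the
weights \<Prod>_j (1 - \<xi>_{w(j)})^e(j) of the word w before and after the swap, so the
product telescopes to sgn \<sigma> times the weight of the identity over the weight of \<sigma>.\<close>

definition upper_triangular :: "cmat \<Rightarrow> bool" where
  "upper_triangular M \<longleftrightarrow> (\<forall>i j. j < i \<longrightarrow> M i j = 0)"

lemma upper_triangular_kron:
  assumes "upper_triangular A" "upper_triangular B" "d > 0"
  shows "upper_triangular (kron d A B)"
  unfolding upper_triangular_def kron_def
proof (intro allI impI)
  fix i j :: nat assume "j < i"
  moreover have "j div d \<le> i div d" and "d * (i div d) + i mod d = i" and "d * (j div d) + j mod d = j"
    using \<open>j < i\<close> by (simp_all add: div_le_mono)
  ultimately consider "j div d < i div d" | "j div d = i div d" "j mod d < i mod d"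
    by (metis le_neq_implies_less nat_add_left_cancel_less)
  then show "A (i div d) (j div d) * B (i mod d) (j mod d) = 0"
    by cases (use assms in \<open>auto simp: upper_triangular_def\<close>)
qed

lemma upper_triangular_kpow: "upper_triangular (kpow m)"
proof (induction m)
  case (Suc m)
  have "upper_triangular I2" by (simp add: upper_triangular_def I2_def)
  with Suc show ?case by (simp add: upper_triangular_kron)
qed (simp add: upper_triangular_def)

lemma upper_triangular_Tmat: "upper_triangular (Tmat N \<xi> l \<alpha> \<beta>)"
  unfolding Tmat_def
  by (intro upper_triangular_kron upper_triangular_kpow)
    (auto simp: upper_triangular_def Smat_def)

lemma upper_triangular_mmult:
  assumes "upper_triangular A" "upper_triangular B"
  shows "upper_triangular (mmult d A B)"
  unfolding upper_triangular_def mmult_def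
proof (intro allI impI sum.neutral ballI)
  fix i j l :: nat assume "j < i"
  then have "l < i \<or> j < l" by auto
  then show "A i l * B l j = 0" using assms by (auto simp: upper_triangular_def)
qed

lemma upper_triangular_Aw: "upper_triangular (Aw N \<xi> w as)"
proof (induction as arbitrary: w)
  case Nil
  show ?case by (simp add: upper_triangular_def idm_def)
qed (simp add: upper_triangular_mmult upper_triangular_Tmat)

lemma mmult_diag_upper_triangular:
  assumes "upper_triangular A" "upper_triangular B" "h < d"
  shows "mmult d A B h h = A h h * B h h"
proof -
  have "mmult d A B h h = A h h * B h h + (\<Sum>l\<in>{..<d} - {h}. A h l * B l h)"
    using assms(3) unfolding mmult_def by (subst sum.remove[of _ h]) auto
  also have "(\<Sum>l\<in>{..<d} - {h}. A h l * B l h) = 0"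
  proof (intro sum.neutral ballI)
    fix l assume "l \<in> {..<d} - {h}"
    then have "l < h \<or> h < l" by auto
    then show "A h l * B l h = 0" using assms(1,2) by (auto simp: upper_triangular_def)
  qed
  finally show ?thesis by simp
qed

lemma kpow_diag: "kpow m i i = (if i < 2 ^ m then 1 else 0)"
proof (induction m arbitrary: i)
  case (Suc m)
  have "i div 2 < 2 ^ m \<longleftrightarrow> i < 2 ^ Suc m" by auto
  then show ?case using Suc by (simp add: kron_def I2_def)
qed simp

lemma Tmat_diag:
  assumes "1 \<le> l" "l < N" "i < 2 ^ N"
  shows "Tmat N \<xi> l \<alpha> \<beta> i i =
    Smat (\<xi> \<beta>) (\<xi> \<alpha>) (i div 2 ^ (N - l - 1) mod 4) (i div 2 ^ (N - l - 1) mod 4)"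
proof -
  define d :: nat where "d = 2 ^ (N - l - 1)"
  have "(2::nat) ^ N = 2 ^ ((l - 1) + 2 + (N - l - 1))" using assms(1,2) by simp
  then have "(2::nat) ^ N = 2 ^ (l - 1) * (4 * d)"
    by (simp only: power_add d_def) simp
  then have "i div d div 4 < 2 ^ (l - 1)"
    using assms(3) by (simp add: div_mult2_eq less_mult_imp_div_less mult.commute)
  moreover have "i mod d < d" by (simp add: d_def)
  ultimately show ?thesis
    unfolding Tmat_def kron_def d_def[symmetric] by (simp add: kpow_diag d_def)
qed

lemma sum_hidx_add: "k \<le> N \<Longrightarrow> (\<Sum>i=1..k. 2 ^ (N - i)) + 2 ^ (N - k) = (2::nat) ^ N"
proof (induction k)
  case (Suc k)
  then have "(2::nat) ^ (N - k) = 2 ^ (N - Suc k) + 2 ^ (N - Suc k)"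
    by (metis Suc_diff_le diff_Suc_Suc mult_2 power_Suc)
  with Suc show ?case by (simp add: add.assoc)
qed simp

lemma hidx_minus_one_eq: "k \<le> N \<Longrightarrow> hidx N k - 1 = push_bit (N - k) (mask k)"
proof -
  assume "k \<le> N"
  then have "push_bit (N - k) (mask k) = (2::nat) ^ k * 2 ^ (N - k) - 2 ^ (N - k)"
    by (simp add: push_bit_eq_mult mask_eq_exp_minus_1 diff_mult_distrib)
  also have "\<dots> = 2 ^ N - 2 ^ (N - k)" using \<open>k \<le> N\<close> by (simp flip: power_add)
  finally show ?thesis using sum_hidx_add[OF \<open>k \<le> N\<close>] by (simp add: hidx_def)
qed

lemma push_bit_mask_less: "push_bit r (mask k) < (2::nat) ^ (r + k)"
  by (simp add: push_bit_eq_mult mask_eq_exp_minus_1 power_add)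

lemma nat_mod_four_bits: "(n::nat) mod 4 = of_bool (bit n 0) + 2 * of_bool (bit n 1)"
  using mod_mult2_eq[of n 2 2] by (simp add: bit_iff_odd mod2_eq_if)

lemma bit_push_bit_mask_div:
  "bit (push_bit r (mask k) div 2 ^ m :: nat) i \<longleftrightarrow> r \<le> m + i \<and> m + i < r + k"
  by (auto simp: bit_push_bit_iff bit_mask_iff drop_bit_eq_div[symmetric] bit_drop_bit_eq)

lemma hidx_digit:
  assumes "1 \<le> l" "l < N" "k \<le> N"
  shows "(push_bit (N - k) (mask k) div 2 ^ (N - l - 1) mod 4 :: nat) = of_bool (l < k) + 2 * of_bool (l \<le> k)"
proof -
  have "N - k \<le> N - l - 1 + 0 \<and> N - l - 1 + 0 < N - k + k \<longleftrightarrow> l < k"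
    and "N - k \<le> N - l - 1 + 1 \<and> N - l - 1 + 1 < N - k + k \<longleftrightarrow> l \<le> k"
    using assms by linarith+
  then show ?thesis
    by (simp only: nat_mod_four_bits bit_push_bit_mask_div)
qed

definition hidx_exponent :: "nat \<Rightarrow> nat \<Rightarrow> int" where
  "hidx_exponent k j = (if j \<le> k then int j - 1 else int j - 2)"

lemma Tmat_diag_hidx:
  assumes "1 \<le> l" "l < N" "k \<le> N"
  shows "Tmat N \<xi> l \<alpha> \<beta> (push_bit (N - k) (mask k)) (push_bit (N - k) (mask k)) =
    - (((1 - \<xi> \<beta>) / (1 - \<xi> \<alpha>)) powi (hidx_exponent k (Suc l) - hidx_exponent k l))"
proof -
  have "push_bit (N - k) (mask k) < (2::nat) ^ N"
    using push_bit_mask_less[of "N - k" k] assms(3) by simp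
  have "Tmat N \<xi> l \<alpha> \<beta> (push_bit (N - k) (mask k)) (push_bit (N - k) (mask k)) =
      Smat (\<xi> \<beta>) (\<xi> \<alpha>)
        (of_bool (l < k) + 2 * of_bool (l \<le> k)) (of_bool (l < k) + 2 * of_bool (l \<le> k))"
    unfolding Tmat_diag[OF assms(1,2) \<open>push_bit (N - k) (mask k) < 2 ^ N\<close>] hidx_digit[OF assms] ..
  then show ?thesis
    by (cases l k rule: linorder_cases) (simp_all add: Smat_def hidx_exponent_def minus_divide_left)
qed

definition weight ::
    "nat \<Rightarrow> (nat \<Rightarrow> complex) \<Rightarrow> (nat \<Rightarrow> int) \<Rightarrow> (nat \<Rightarrow> nat) \<Rightarrow> complex" where
  "weight N \<xi> e w = (\<Prod>j\<in>{1..N}. (1 - \<xi> (w j)) powi e j)"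

lemma weight_swapw:
  assumes "1 \<le> a" "a < N" and "\<xi> (w a) \<noteq> 1" "\<xi> (w (Suc a)) \<noteq> 1"
  shows "weight N \<xi> e w =
    ((1 - \<xi> (w (Suc a))) / (1 - \<xi> (w a))) powi (e (Suc a) - e a) * weight N \<xi> e (swapw a w)"
proof -
  define f where "f v j = (1 - \<xi> (v j)) powi e j" for v j
  define R where "R = {1..N} - {a, Suc a}"
  have split: "weight N \<xi> e v = f v a * f v (Suc a) * prod (f v) R" for v
  proof -
    have "{1..N} = insert a (insert (Suc a) R)" using assms(1,2) by (auto simp: R_def)
    then have "weight N \<xi> e v = prod (f v) (insert a (insert (Suc a) R))"
      by (simp add: weight_def f_def)
    then show ?thesis by (simp add: R_def mult.assoc)
  qed
  have rest: "prod (f (swapw a w)) R = prod (f w) R"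
    by (intro prod.cong) (auto simp: f_def swapw_def R_def)
  define u where "u = 1 - \<xi> (w a)"
  define v where "v = 1 - \<xi> (w (Suc a))"
  define c where "c = e (Suc a) - e a"
  have "u \<noteq> 0" "v \<noteq> 0" using assms(3,4) by (auto simp: u_def v_def)
  then have "u powi e a * v powi e (Suc a) = (v / u) powi c * (v powi e a * u powi e (Suc a))"
    by (simp add: c_def power_int_divide_distrib power_int_diff field_simps)
  then show ?thesis
    using split[of w] split[of "swapw a w"] rest
    by (simp add: f_def swapw_def u_def v_def c_def)
qed

lemma weight_nonzero:
  assumes "\<forall>j\<in>{1..N}. \<xi> (w j) \<noteq> 1"
  shows "weight N \<xi> e w \<noteq> 0"
  using assms unfolding weight_def by (subst prod_zero_iff) (auto simp: power_int_eq_0_iff)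

lemma prod_powi_hidx_exponent:
  fixes r :: "nat \<Rightarrow> 'a::field"
  assumes "k \<le> N"
  shows "(\<Prod>j=1..N. r j powi hidx_exponent k j) =
    (\<Prod>j=1..k. r j ^ (j - 1)) * (\<Prod>j=k+1..N. r j powi (int j - 2))"
proof -
  have "(\<Prod>j=1..k. r j powi hidx_exponent k j) = (\<Prod>j=1..k. r j ^ (j - 1))"
  proof (rule prod.cong[OF refl])
    fix j assume "j \<in> {1..k}"
    then have "hidx_exponent k j = int (j - 1)" by (auto simp: hidx_exponent_def of_nat_diff)
    then show "r j powi hidx_exponent k j = r j ^ (j - 1)" by simp
  qed
  moreover have "(\<Prod>j=k+1..N. r j powi hidx_exponent k j) = (\<Prod>j=k+1..N. r j powi (int j - 2))"
    by (rule prod.cong[OF refl]) (simp add: hidx_exponent_def)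
  ultimately show ?thesis
    using prod.ub_add_nat[of 1 k "\<lambda>j. r j powi hidx_exponent k j" "N - k"] assms by simp
qed

lemma Aw_diag_weight:
  assumes \<xi>: "\<forall>j\<in>{1..N}. \<xi> j \<noteq> 1" and "H < 2 ^ N"
    and Tmat_H: "\<And>l \<alpha> \<beta>. 1 \<le> l \<Longrightarrow> l < N \<Longrightarrow>
      Tmat N \<xi> l \<alpha> \<beta> H H = - (((1 - \<xi> \<beta>) / (1 - \<xi> \<alpha>)) powi (e (Suc l) - e l))"
  shows "w ` {1..N} \<subseteq> {1..N} \<Longrightarrow> set as \<subseteq> {1..N - 1} \<Longrightarrow>
    Aw N \<xi> w as H H * weight N \<xi> e (wordof w as) = (-1) ^ length as * weight N \<xi> e w"
proof (induction as arbitrary: w)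
  case Nil
  then show ?case by (simp add: idm_def)
next
  case (Cons a as)
  have a: "1 \<le> a" "a < N" using Cons.prems(2) by auto
  then have "a \<in> {1..N}" "Suc a \<in> {1..N}" by auto
  then have w_a: "w a \<in> {1..N}" "w (Suc a) \<in> {1..N}" using Cons.prems(1) by blast+
  then have \<xi>_w: "\<xi> (w a) \<noteq> 1" "\<xi> (w (Suc a)) \<noteq> 1" using \<xi> by auto
  have "swapw a w ` {1..N} \<subseteq> {1..N}" using Cons.prems(1) w_a by (auto simp: swapw_def)
  then have IH: "Aw N \<xi> (swapw a w) as H H * weight N \<xi> e (wordof (swapw a w) as) =
      (-1) ^ length as * weight N \<xi> e (swapw a w)"
    using Cons.IH Cons.prems(2) by simp
  have "Aw N \<xi> w (a # as) H H = Aw N \<xi> (swapw a w) as H H * Tmat N \<xi> a (w a) (w (Suc a)) H H"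
    using mmult_diag_upper_triangular[OF upper_triangular_Aw upper_triangular_Tmat \<open>H < 2 ^ N\<close>]
    by simp
  then have "Aw N \<xi> w (a # as) H H * weight N \<xi> e (wordof w (a # as)) =
      (Aw N \<xi> (swapw a w) as H H * weight N \<xi> e (wordof (swapw a w) as))
      * Tmat N \<xi> a (w a) (w (Suc a)) H H"
    unfolding wordof.simps by (simp only: ac_simps)
  also have "\<dots> = (-1) ^ length as * weight N \<xi> e (swapw a w) * Tmat N \<xi> a (w a) (w (Suc a)) H H"
    unfolding IH ..
  also have "\<dots> = (-1) ^ length (a # as) * weight N \<xi> e w"
    unfolding Tmat_H[OF a] weight_swapw[of a N \<xi> w e, OF a \<xi>_w] by (simp add: algebra_simps)
  finally show ?case .
qed

lemma swapw_eq_comp_transpose: "swapw a w = w \<circ> Transposition.transpose a (Suc a)"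
  by (auto simp: swapw_def fun_eq_iff transpose_def)

lemma sign_wordof: "permutation w \<Longrightarrow> sign (wordof w as) = (-1) ^ length as * sign w"
proof (induction as arbitrary: w)
  case (Cons a as)
  have "permutation (swapw a w)" "sign (swapw a w) = - sign w"
    unfolding swapw_eq_comp_transpose using Cons.prems
    by (simp_all add: permutation_compose permutation_swap_id sign_compose sign_swap_id)
  then show ?case using Cons.IH by simp
qed simp

theorem lemma2p2:
  fixes N :: nat and \<xi> :: "nat \<Rightarrow> complex" and as :: "nat list"
    and \<sigma> :: "nat \<Rightarrow> nat" and k :: nat
  assumes "N \<ge> 2"
    and "\<forall>j\<in>{1..N}. \<xi> j \<noteq> 1"
    and "\<sigma> permutes {1..N}"
    and "set as \<subseteq> {1..N - 1}"
    and "\<sigma> = wordof id as"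
    and "k \<le> N"
  shows "Amat N \<xi> as (hidx N k - 1) (hidx N k - 1) =
    of_int (sign \<sigma>)
    * (\<Prod>j=1..k. ((1 - \<xi> j) / (1 - \<xi> (\<sigma> j))) ^ (j - 1))
    * (\<Prod>j=k+1..N. ((1 - \<xi> j) / (1 - \<xi> (\<sigma> j))) powi (int j - 2))"
proof -
  define H :: nat where "H = push_bit (N - k) (mask k)"
  define e where "e = hidx_exponent k"
  have H_less: "H < 2 ^ N" using push_bit_mask_less[of "N - k" k] assms(6) by (simp add: H_def)
  have Tmat_H: "Tmat N \<xi> l \<alpha> \<beta> H H = - (((1 - \<xi> \<beta>) / (1 - \<xi> \<alpha>)) powi (e (Suc l) - e l))"
    if "1 \<le> l" "l < N" for l \<alpha> \<beta>
    unfolding H_def e_def using Tmat_diag_hidx that assms(6) .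
  have diag: "Amat N \<xi> as H H * weight N \<xi> e \<sigma> = (-1) ^ length as * weight N \<xi> e id"
    using Aw_diag_weight[OF assms(2) H_less Tmat_H, of id as] assms(4,5) by (simp add: Amat_def)
  have "\<forall>j\<in>{1..N}. \<xi> (\<sigma> j) \<noteq> 1"
    using assms(2) permutes_in_image[OF assms(3)] by blast
  then have "Amat N \<xi> as H H = (-1) ^ length as * (weight N \<xi> e id / weight N \<xi> e \<sigma>)"
    using diag weight_nonzero by (metis nonzero_mult_div_cancel_right times_divide_eq_right)
  also have "\<dots> = of_int (sign \<sigma>) * (\<Prod>j=1..N. ((1 - \<xi> j) / (1 - \<xi> (\<sigma> j))) powi e j)"
    using sign_wordof[of id as] assms(5)
    by (simp add: weight_def power_int_divide_distrib prod_dividef)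
  also have "\<dots> = of_int (sign \<sigma>)
    * (\<Prod>j=1..k. ((1 - \<xi> j) / (1 - \<xi> (\<sigma> j))) ^ (j - 1))
    * (\<Prod>j=k+1..N. ((1 - \<xi> j) / (1 - \<xi> (\<sigma> j))) powi (int j - 2))"
    unfolding e_def prod_powi_hidx_exponent[OF assms(6)] by (simp only: mult.assoc)
  finally show ?thesis unfolding hidx_minus_one_eq[OF assms(6)] H_def .
qed

end
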